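(* Let $M\subseteq\mathbb{C}^2$ be a set of pairwise distinct vectors, let $\mu:\mathbb{C}^2\otimes\mathbb{C}^2\to\mathbb{C}^2$ be a linear map that is associative, i.e. $\mu\circ(\mu\otimes\mathrm{id}) = \mu\circ(\mathrm{id}\otimes\mu)$, and let $e\in M$ be a unit for $\mu$, i.e. $\mu(e\otimes m) = m = \mu(m\otimes e)$ for all $m\in M$. Then the monoid $(M,\mu)$ is commutative: $\mu(a\otimes b) = \mu(b\otimes a)$ for all $a,b\in M$.
   Context: Such a triple $(M,\mu,e)$ is called a monoid over $\mathbb{H}=\mathbb{C}^2$. *)

theory Defs
  imports "HOL-Analysis.Analysis"
begin

text \<open>The tensor product C^2 (x) C^2 is realised concretely as the 4-dimensional
  space complex^(2\<times>2) (coordinates indexed by pairs (i,j)); the elementary tensor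
  a (x) b has coordinates a_i * b_j.\<close>

definition tensor2 :: "complex^2 \<Rightarrow> complex^2 \<Rightarrow> complex^(2\<times>2)" where
  "tensor2 a b = (\<chi> p. a $ fst p * b $ snd p)"

end

theory Submission
  imports Defs
begin

text \<open>For a fixed a, the
  vectors commuting with a form a subspace containing e and a, hence containing span {e, a}.
  If a is not a multiple of e, then {e, a} spans the plane, so b commutes with a; otherwise
  a lies in span {e, b} and a commutes with b.\<close>

lemma tensor2_add_left: "tensor2 (x + y) z = tensor2 x z + tensor2 y z"
  by (simp add: tensor2_def vec_eq_iff algebra_simps)

lemma tensor2_add_right: "tensor2 z (x + y) = tensor2 z x + tensor2 z y"
  by (simp add: tensor2_def vec_eq_iff algebra_simps)

lemma tensor2_scale_left: "tensor2 (c *s x) z = c *s tensor2 x z"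
  by (simp add: tensor2_def vec_eq_iff algebra_simps)

lemma tensor2_scale_right: "tensor2 z (c *s x) = c *s tensor2 z x"
  by (simp add: tensor2_def vec_eq_iff algebra_simps)

lemma tensor2_zero_left: "tensor2 0 z = 0"
  by (simp add: tensor2_def vec_eq_iff)

lemma tensor2_zero_right: "tensor2 z 0 = 0"
  by (simp add: tensor2_def vec_eq_iff)

lemma vec_span_pair_eq_UNIV:
  fixes e a :: "'a::field ^ 'n"
  assumes "CARD('n) \<le> 2" and "e \<noteq> 0" and "a \<notin> vec.span {e}"
  shows "vec.span {e, a} = UNIV"
proof -
  have indep: "vec.independent {e, a}"
    using assms(2,3) by (simp add: vec.independent_insertI insert_commute)
  have "a \<noteq> e"
    using assms(3) vec.span_base by blast
  then have "vec.dim (UNIV :: ('a ^ 'n) set) \<le> card {e, a}"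
    unfolding vec_dim_card using assms(1) by simp
  then show ?thesis
    using vec.card_ge_dim_independent[OF subset_UNIV indep] by blast
qed

lemma vec_span_dichotomy:
  fixes e a b :: "'a::field ^ 'n"
  assumes "CARD('n) \<le> 2" and "e \<noteq> 0"
  shows "a \<in> vec.span {e, b} \<or> b \<in> vec.span {e, a}"
proof (cases "a \<in> vec.span {e}")
  case True
  then show ?thesis
    using vec.span_mono[of "{e}" "{e, b}"] by blast
next
  case False
  then show ?thesis
    using vec_span_pair_eq_UNIV[OF assms] by blast
qed

lemma commutant_subspace:
  assumes lin: "Vector_Spaces.linear (*s) (*s) \<mu>"
  shows "vec.subspace {y. \<mu> (tensor2 x y) = \<mu> (tensor2 y x)}"
proof -
  interpret \<mu>: Vector_Spaces.linear "(*s)" "(*s)" \<mu>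
    by (fact lin)
  show ?thesis
    by (simp add: vec.subspace_def tensor2_add_left tensor2_add_right tensor2_scale_left
        tensor2_scale_right tensor2_zero_left tensor2_zero_right \<mu>.add \<mu>.scale)
qed

lemma commute_on_span_unit:
  assumes lin: "Vector_Spaces.linear (*s) (*s) \<mu>"
    and "\<mu> (tensor2 e x) = x" and "\<mu> (tensor2 x e) = x"
    and "y \<in> vec.span {e, x}"
  shows "\<mu> (tensor2 x y) = \<mu> (tensor2 y x)"
proof -
  have "{e, x} \<subseteq> {y. \<mu> (tensor2 x y) = \<mu> (tensor2 y x)}"
    using assms(2,3) by simp
  then show ?thesis
    using vec.span_minimal[OF _ commutant_subspace[OF lin]] assms(4) by blast
qed

lemma unit_zero_imp_zero:
  assumes lin: "Vector_Spaces.linear (*s) (*s) \<mu>"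
    and "\<mu> (tensor2 0 x) = x"
  shows "x = 0"
proof -
  interpret \<mu>: Vector_Spaces.linear "(*s)" "(*s)" \<mu>
    by (fact lin)
  show ?thesis
    using assms(2) by (simp add: tensor2_zero_left)
qed

theorem proposition4p2:
  fixes M :: "(complex^2) set"
    and \<mu> :: "complex^(2\<times>2) \<Rightarrow> complex^2"
    and e :: "complex^2"
  assumes lin: "Vector_Spaces.linear (*s) (*s) \<mu>"
    and assoc: "\<forall>a b c. \<mu> (tensor2 (\<mu> (tensor2 a b)) c) = \<mu> (tensor2 a (\<mu> (tensor2 b c)))"
    and eM: "e \<in> M"
    and unit: "\<forall>m\<in>M. \<mu> (tensor2 e m) = m \<and> \<mu> (tensor2 m e) = m"
  shows "\<forall>a\<in>M. \<forall>b\<in>M. \<mu> (tensor2 a b) = \<mu> (tensor2 b a)"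
proof (intro ballI)
  fix a b assume "a \<in> M" "b \<in> M"
  then have a_unit: "\<mu> (tensor2 e a) = a" "\<mu> (tensor2 a e) = a"
    and b_unit: "\<mu> (tensor2 e b) = b" "\<mu> (tensor2 b e) = b"
    using unit by auto
  have "a \<in> vec.span {e, b} \<or> b \<in> vec.span {e, a}"
  proof (cases "e = 0")
    case True
    then have "a = 0"
      using unit_zero_imp_zero[OF lin] a_unit(1) by simp
    then show ?thesis
      by (simp add: vec.span_zero)
  qed (simp add: vec_span_dichotomy)
  then show "\<mu> (tensor2 a b) = \<mu> (tensor2 b a)"
    using commute_on_span_unit[OF lin] a_unit b_unit by metis
qed

end
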